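(* Consider the problem $\min_{x\in\mathbb{R}^n} F(x) := f(x)+\psi(x)+\phi(x)$ under the assumptions A.1–A.4 and with the algorithm CPGD described in the context. Then the iterates of CPGD satisfy, for every $k\ge 0$, $$F(x_{k+1}) \le F(x_k) - \frac{\eta_{\min}}{2}\,\|x_{k+1}-x_k\|^2 .$$
   Context: Block structure: $U\in\mathbb{R}^{n\times n}$ is a column permutation of the identity, $U=[U_1,\dots,U_N]$ with $U_i\in\mathbb{R}^{n\times n_i}$, $\sum_i n_i=n$; every $x\in\mathbb{R}^n$ is written uniquely as $x=\sum_i U_i x^{(i)}$ with $x^{(i)}=U_i^T x\in\mathbb{R}^{n_i}$, and $x^{\neq i}$ denotes the collection of blocks $x^{(j)}$, $j\neq i$. Assumptions: (A.1) $f:\mathbb{R}^n\to\mathbb{R}$ is differentiable and for each $i=1,\dots,N$ there is $L_i(x^{\neq i})$ (possibly depending on the other blocks) with $\|U_i^T(\nabla f(x+U_ih)-\nabla f(x))\|\le L_i(x^{\neq i})\|h\|$ for all $x\in\mathbb{R}^n$, $h\in\mathbb{R}^{n_i}$. (A.2) $\psi:\mathbb{R}^n\to\mathbb{R}$ is twice continuously differentiable (possibly nonconvex and nonseparable), and there are an integer $p\ge1$ and constants $H_{\psi_i}>0$ with $\|U_i^T\nabla^2\psi(y)U_i\|\le H_{\psi_i}\|y\|^p$ for all $y\in\mathbb{R}^n$, $i=1,\dots,N$. (A.3) $\phi$ is the indicator function of a nonempty closed convex set $Q=\prod_{i=1}^N Q_i$, $Q_i\subseteq\mathbb{R}^{n_i}$;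 $\phi_i$ denotes the indicator of $Q_i$, so $\phi(x)=\sum_i\phi_i(x^{(i)})$. (A.4) Problem $\min F$ has a solution, so $F^*=\min F>-\infty$. Let $h=f+\psi$. Algorithm CPGD: start from $x_0\in Q$. For $k\ge0$, set $x_{k,0}=x_k$ and for $i_k=1,\dots,N$ let $x_{k,i_k}=(x_{k+1}^{(1)},\dots,x_{k+1}^{(i_k)},x_k^{(i_k+1)},\dots,x_k^{(N)})$ (so $x_{k,N}=x_{k+1}$). At inner step $i_k$, with current point $x_{k,i_k-1}$ and $L_{i_k}:=L_{i_k}(x_{k,i_k-1}^{\neq i_k})$: (1) choose $H_{f,i_k}=\frac{L_{i_k}+\eta_{i_k}}{2}$ with $\eta_{i_k}>0$, and compute the nonnegative root $\alpha_{k,i_k}\ge0$ of $2^{p-1}H_{\psi_{i_k}}\alpha^{p+1}+(2^{p-1}H_{\psi_{i_k}}\|x_{k,i_k-1}\|^p+H_{f,i_k})\alpha=\|U_{i_k}^T\nabla h(x_{k,i_k-1})\|$; (2) set $H_{F,i_k}=2^{p-1}H_{\psi_{i_k}}\|x_{k,i_k-1}\|^p+2^{p-1}H_{\psi_{i_k}}\alpha_{k,i_k}^p+H_{f,i_k}$; (3) compute $d_{k,i_k}=\arg\min_{d\in\mathbb{R}^{n_{i_k}}}\langle U_{i_k}^T\nabla h(x_{k,i_k-1}),d\rangle+\frac{H_{F,i_k}}{2}\|d\|^2+\phi_{i_k}(x_k^{(i_k)}+d)$, i.e. $x_k^{(i_k)}+d_{k,i_k}=\mathrm{proj}_{Q_{i_k}}\big(x_k^{(i_k)}-\frac{1}{H_{F,i_k}}U_{i_k}^T\nabla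 h(x_{k,i_k-1})\big)$; (4) set $x_{k+1}^{(i_k)}=x_k^{(i_k)}+d_{k,i_k}$. Finally $\eta_{\min}:=\min_{k,i_k}\eta_{i_k}$ (the minimum over all outer iterations $k$ and inner steps $i_k$ of the parameters $\eta_{i_k}$). *)

theory Defs
  imports "HOL-Analysis.Analysis"
begin

text \<open>Block structure: the column permutation U = [U_1,...,U_N] of the identity is encoded
by a partition of the coordinate index type 'n into blocks B 1, ..., B N.
U_i U_i^T x is the coordinate projection onto block B i; norms and inner products of
block vectors x^(i) coincide with those of their zero-padded embeddings.\<close>

definition blockproj :: "'n set \<Rightarrow> real^'n \<Rightarrow> real^'n" where
  "blockproj S x = (\<chi> j. if j \<in> S then x $ j else 0)"

definition block_space :: "'n set \<Rightarrow> (real^'n) set" where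
  "block_space S = {v. \<forall>j. j \<notin> S \<longrightarrow> v $ j = 0}"

text \<open>Product set Q = Q_1 x ... x Q_N (each Q i embedded in block space).\<close>
definition prodset :: "nat \<Rightarrow> (nat \<Rightarrow> 'n set) \<Rightarrow> (nat \<Rightarrow> (real^'n) set) \<Rightarrow> (real^'n) set" where
  "prodset N B Q = {x. \<forall>i\<in>{1..N}. blockproj (B i) x \<in> Q i}"

text \<open>F = f + psi + phi with phi the indicator of Q (extended real valued).\<close>
definition Fobj :: "(real^'n \<Rightarrow> real) \<Rightarrow> (real^'n \<Rightarrow> real) \<Rightarrow> (real^'n) set \<Rightarrow> real^'n \<Rightarrow> ereal" where
  "Fobj f \<psi> Q x = ereal (f x + \<psi> x) + (if x \<in> Q then 0 else \<infinity>)"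

end

theory Submission
  imports Defs
begin

text \<open>Each inner step of CPGD minimises, over block \<open>i\<close>, a quadratic upper model of
\<open>h = f + \<psi>\<close> at the current point. The model is valid because \<open>\<alpha>\<close> bounds the step a priori:
the root equation says \<open>H_F \<alpha> = |U_i^T grad h|\<close> and the projection is nonexpansive, so the
step has length at most \<open>\<alpha>\<close>, and along it the Hessian bound (A.2) gives block curvature at
most \<open>2^(p-1) H_\<psi> (|x|^p + \<alpha>^p)\<close>, while (A.1) controls \<open>f\<close>. The variational inequality
of the projection then yields a decrease \<open>\<eta>_i/2 |d_i|^2\<close> per block. Block increments are
pairwise orthogonal, so these decreases add up to \<open>\<eta>_min/2 |x_(k+1) - x_k|^2\<close>.\<close>

lemma convex_on_nonneg_power: "convex_on {0::real..} (\<lambda>x. x ^ n)"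
  by (cases "even n") (auto intro: convex_on_subset[OF convex_power_even] convex_power_odd)

lemma power_add_le_two_power:
  fixes a b :: real
  assumes "0 \<le> a" "0 \<le> b" "1 \<le> p"
  shows "(a + b) ^ p \<le> 2 ^ (p - 1) * (a ^ p + b ^ p)"
proof -
  have "((a + b) / 2) ^ p \<le> (a ^ p + b ^ p) / 2"
    using convex_onD[OF convex_on_nonneg_power, of "1/2" a b] assms by (simp add: add_divide_distrib)
  moreover have "(2::real) ^ p = 2 * 2 ^ (p - 1)"
    using assms(3) by (simp add: power_eq_if)
  ultimately show ?thesis
    by (simp add: power_divide field_simps)
qed

lemma norm_power_segment_le:
  fixes y d :: "'a::real_normed_vector"
  assumes "norm d \<le> \<alpha>" "0 \<le> s" "s \<le> 1" "1 \<le> p"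
  shows "norm (y + s *\<^sub>R d) ^ p \<le> 2 ^ (p - 1) * (norm y ^ p + \<alpha> ^ p)"
proof -
  have "norm (y + s *\<^sub>R d) \<le> norm y + \<alpha>"
    using norm_triangle_ineq[of y "s *\<^sub>R d"] mult_mono[of s 1 "norm d" \<alpha>] assms by simp
  then have "norm (y + s *\<^sub>R d) ^ p \<le> (norm y + \<alpha>) ^ p"
    by (rule power_mono) simp
  also have "\<dots> \<le> 2 ^ (p - 1) * (norm y ^ p + \<alpha> ^ p)"
    using assms order_trans[OF norm_ge_zero assms(1)] by (intro power_add_le_two_power) auto
  finally show ?thesis .
qed

lemma blockproj_nth [simp]: "blockproj S x $ j = (if j \<in> S then x $ j else 0)"
  by (simp add: blockproj_def)

lemma blockproj_diff: "blockproj S (x - y) = blockproj S x - blockproj S y"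
  by (simp add: vec_eq_iff)

lemma in_block_space_iff: "v \<in> block_space S \<longleftrightarrow> (\<forall>j. j \<notin> S \<longrightarrow> v $ j = 0)"
  by (simp add: block_space_def)

lemma blockproj_in_block_space: "blockproj S x \<in> block_space S"
  by (simp add: in_block_space_iff)

lemma blockproj_block_space: "v \<in> block_space S \<Longrightarrow> blockproj S v = v"
  by (simp add: in_block_space_iff vec_eq_iff)

lemma blockproj_replace_block:
  "v \<in> block_space S \<Longrightarrow> blockproj S (x - blockproj S x + v) = v"
  by (simp add: in_block_space_iff vec_eq_iff)

lemma blockproj_block_space_disjoint:
  "v \<in> block_space S \<Longrightarrow> S \<inter> T = {} \<Longrightarrow> blockproj T v = 0"
  by (auto simp: in_block_space_iff vec_eq_iff)

lemma inner_blockproj_block_space: "v \<in> block_space S \<Longrightarrow> blockproj S x \<bullet> v = x \<bullet> v"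
  unfolding inner_vec_def in_block_space_iff by (intro sum.cong) auto

lemma block_space_diff:
  "u \<in> block_space S \<Longrightarrow> v \<in> block_space S \<Longrightarrow> u - v \<in> block_space S"
  by (simp add: in_block_space_iff)

lemma scaleR_block_space: "v \<in> block_space S \<Longrightarrow> c *\<^sub>R v \<in> block_space S"
  by (simp add: in_block_space_iff)

lemma bounded_linear_blockproj: "bounded_linear (blockproj S)"
  by (auto intro!: linearI simp: vec_eq_iff linear_conv_bounded_linear[symmetric])

lemma has_real_derivative_along_line:
  fixes g :: "'a::real_normed_vector \<Rightarrow> real"
  assumes "(g has_derivative D) (at (y + t *\<^sub>R d))"
  shows "((\<lambda>s. g (y + s *\<^sub>R d)) has_real_derivative D d) (at t)"
proof -
  have "((\<lambda>s. y + s *\<^sub>R d) has_derivative (\<lambda>s. s *\<^sub>R d)) (at t)"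
    by (auto intro!: derivative_eq_intros)
  from has_derivative_compose[OF this assms] have "((\<lambda>s. g (y + s *\<^sub>R d)) has_derivative (\<lambda>s. D (s *\<^sub>R d))) (at t)"
    by (simp add: o_def)
  moreover have "(\<lambda>s. D (s *\<^sub>R d)) = (*) (D d)"
    using linear_scale[OF has_derivative_linear[OF assms]] by (simp add: fun_eq_iff)
  ultimately show ?thesis
    by (simp add: has_field_derivative_def)
qed

lemma descent_along_segment:
  fixes F :: "'a::real_inner \<Rightarrow> real"
  assumes deriv: "\<And>z. (F has_derivative (\<lambda>h. G z \<bullet> h)) (at z)"
    and incr: "\<And>t. 0 \<le> t \<Longrightarrow> t \<le> 1 \<Longrightarrow> (G (y + t *\<^sub>R d) - G y) \<bullet> d \<le> C * t * norm d ^ 2"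
  shows "F (y + d) \<le> F y + G y \<bullet> d + C / 2 * norm d ^ 2"
proof -
  define \<phi> where "\<phi> t = F (y + t *\<^sub>R d) - t * (G y \<bullet> d) - C / 2 * t\<^sup>2 * norm d ^ 2" for t
  have "\<phi> 1 \<le> \<phi> 0"
  proof (rule DERIV_nonpos_imp_nonincreasing[of 0 1])
    fix t :: real
    assume t: "0 \<le> t" "t \<le> 1"
    have "((\<lambda>s. F (y + s *\<^sub>R d)) has_real_derivative G (y + t *\<^sub>R d) \<bullet> d) (at t)"
      using has_real_derivative_along_line[OF deriv] .
    then have "(\<phi> has_real_derivative (G (y + t *\<^sub>R d) - G y) \<bullet> d - C * t * norm d ^ 2) (at t)"
      unfolding \<phi>_def by (auto intro!: derivative_eq_intros simp: inner_diff_left)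
    then show "\<exists>D. (\<phi> has_real_derivative D) (at t) \<and> D \<le> 0"
      using incr[OF t] by auto
  qed simp
  then show ?thesis
    by (simp add: \<phi>_def)
qed

lemma inner_gradient_increment_le:
  fixes G :: "'a::real_inner \<Rightarrow> 'a"
  assumes deriv: "\<And>z. (G has_derivative D z) (at z)"
    and curv: "\<And>s. 0 \<le> s \<Longrightarrow> s \<le> 1 \<Longrightarrow> D (y + s *\<^sub>R d) d \<bullet> d \<le> C * norm d ^ 2"
    and t: "0 \<le> t" "t \<le> 1"
  shows "(G (y + t *\<^sub>R d) - G y) \<bullet> d \<le> C * t * norm d ^ 2"
proof (cases "t = 0")
  case False
  have line_deriv: "((\<lambda>s. G (y + s *\<^sub>R d) \<bullet> d) has_real_derivative D (y + s *\<^sub>R d) d \<bullet> d) (at s)" for s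
    using has_real_derivative_along_line[OF has_derivative_inner_left[OF deriv]] .
  have "0 < t"
    using False t by simp
  then obtain s where s: "0 < s" "s < t"
    and mvt: "G (y + t *\<^sub>R d) \<bullet> d - G (y + 0 *\<^sub>R d) \<bullet> d = (t - 0) * (D (y + s *\<^sub>R d) d \<bullet> d)"
    using MVT2[of 0 t "\<lambda>s. G (y + s *\<^sub>R d) \<bullet> d" "\<lambda>s. D (y + s *\<^sub>R d) d \<bullet> d"] line_deriv by blast
  have "t * (D (y + s *\<^sub>R d) d \<bullet> d) \<le> t * (C * norm d ^ 2)"
    using curv[of s] s t by (intro mult_left_mono) auto
  with mvt show ?thesis
    by (simp add: inner_diff_left mult_ac)
qed simp

lemma second_order_upper_bound:
  fixes F :: "'a::real_inner \<Rightarrow> real"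
  assumes "\<And>z. (F has_derivative (\<lambda>h. G z \<bullet> h)) (at z)"
    and "\<And>z. (G has_derivative D z) (at z)"
    and "\<And>s. 0 \<le> s \<Longrightarrow> s \<le> 1 \<Longrightarrow> D (y + s *\<^sub>R d) d \<bullet> d \<le> C * norm d ^ 2"
  shows "F (y + d) \<le> F y + G y \<bullet> d + C / 2 * norm d ^ 2"
  using descent_along_segment[OF assms(1) inner_gradient_increment_le[OF assms(2,3)]] by blast

lemma block_lipschitz_upper_bound:
  fixes f :: "real^'n \<Rightarrow> real"
  assumes deriv: "\<And>z. (f has_derivative (\<lambda>h. g z \<bullet> h)) (at z)"
    and d: "d \<in> block_space S"
    and lip: "\<And>h. h \<in> block_space S \<Longrightarrow> norm (blockproj S (g (y + h) - g y)) \<le> L * norm h"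
  shows "f (y + d) \<le> f y + g y \<bullet> d + L / 2 * norm d ^ 2"
proof (rule descent_along_segment[OF deriv])
  fix t :: real
  assume t: "0 \<le> t" "t \<le> 1"
  have "(g (y + t *\<^sub>R d) - g y) \<bullet> d = blockproj S (g (y + t *\<^sub>R d) - g y) \<bullet> d"
    using inner_blockproj_block_space[OF d] by simp
  also have "\<dots> \<le> norm (blockproj S (g (y + t *\<^sub>R d) - g y)) * norm d"
    by (rule norm_cauchy_schwarz)
  also have "\<dots> \<le> L * norm (t *\<^sub>R d) * norm d"
    using lip scaleR_block_space[OF d] norm_ge_zero by (intro mult_right_mono) blast+
  also have "\<dots> = L * t * norm d ^ 2"
    using t by (simp add: power2_eq_square)
  finally show "(g (y + t *\<^sub>R d) - g y) \<bullet> d \<le> L * t * norm d ^ 2" .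
qed

lemma block_quadratic_form_le:
  fixes H :: "real^'n^'n"
  assumes d: "d \<in> block_space S"
  shows "(H *v d) \<bullet> d \<le> onorm (\<lambda>h. blockproj S (H *v blockproj S h)) * norm d ^ 2"
proof -
  have bl: "bounded_linear (\<lambda>h. blockproj S (H *v blockproj S h))"
    by (intro bounded_linear_compose[OF bounded_linear_blockproj]
        bounded_linear_compose[OF matrix_vector_mul_bounded_linear] bounded_linear_blockproj)
  have "(H *v d) \<bullet> d = blockproj S (H *v blockproj S d) \<bullet> d"
    using inner_blockproj_block_space[OF d] blockproj_block_space[OF d] by simp
  also have "\<dots> \<le> norm (blockproj S (H *v blockproj S d)) * norm d"
    by (rule norm_cauchy_schwarz)
  also have "\<dots> \<le> onorm (\<lambda>h. blockproj S (H *v blockproj S h)) * norm d * norm d"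
    using onorm[OF bl, of d] by (intro mult_right_mono) auto
  finally show ?thesis
    by (simp add: power2_eq_square mult.assoc)
qed

lemma projected_gradient_step:
  fixes G u :: "'a::{real_inner,heine_borel}"
  assumes Q: "convex Q" "closed Q" and u: "u \<in> Q" and c: "0 < c"
  defines "d \<equiv> closest_point Q (u - (1 / c) *\<^sub>R G) - u"
  shows "norm d \<le> norm G / c" and "G \<bullet> d \<le> - c * norm d ^ 2"
proof -
  let ?v = "u - (1 / c) *\<^sub>R G"
  have "norm d = dist (closest_point Q ?v) (closest_point Q u)"
    unfolding d_def closest_point_self[OF u] by (simp add: dist_norm)
  also have "\<dots> \<le> dist ?v u"
    using closest_point_lipschitz[OF Q] u by blast
  finally show "norm d \<le> norm G / c"
    using c by (simp add: dist_norm)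
  have "(?v - closest_point Q ?v) \<bullet> (u - closest_point Q ?v) \<le> 0"
    by (rule closest_point_dot[OF Q u])
  then have "((1 / c) *\<^sub>R G + d) \<bullet> d \<le> 0"
    unfolding d_def by (simp add: algebra_simps)
  then have "(G \<bullet> d + c * norm d ^ 2) / c \<le> 0"
    using c by (simp add: inner_add_left power2_norm_eq_inner add_divide_distrib)
  then show "G \<bullet> d \<le> - c * norm d ^ 2"
    using c by (simp add: divide_le_0_iff)
qed

lemma block_lipschitz_const_nonneg:
  fixes g :: "real^'n \<Rightarrow> real^'n"
  assumes "S \<noteq> {}" and lip: "\<And>h. h \<in> block_space S \<Longrightarrow> norm (blockproj S (g (y + h) - g y)) \<le> L * norm h"
  shows "0 \<le> L"
proof -
  obtain j where "j \<in> S"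
    using assms(1) by blast
  then have "axis j 1 \<in> block_space S"
    by (auto simp: in_block_space_iff axis_def)
  then have "norm (blockproj S (g (y + axis j 1) - g y)) \<le> L"
    using lip by force
  then show ?thesis
    using norm_ge_zero order_trans by blast
qed

lemma block_upper_model:
  fixes f \<psi> :: "real^'n \<Rightarrow> real" and gf g\<psi> :: "real^'n \<Rightarrow> real^'n"
    and H\<psi> :: "real^'n \<Rightarrow> real^'n^'n"
  assumes f_grad: "\<And>z. (f has_derivative (\<lambda>h. gf z \<bullet> h)) (at z)"
    and psi_grad: "\<And>z. (\<psi> has_derivative (\<lambda>h. g\<psi> z \<bullet> h)) (at z)"
    and psi_hess: "\<And>z. (g\<psi> has_derivative (\<lambda>h. H\<psi> z *v h)) (at z)"
    and d: "d \<in> block_space S"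
    and lip: "\<And>h. h \<in> block_space S \<Longrightarrow> norm (blockproj S (gf (y + h) - gf y)) \<le> L * norm h"
    and hess: "\<And>s. 0 \<le> s \<Longrightarrow> s \<le> 1 \<Longrightarrow> onorm (\<lambda>h. blockproj S (H\<psi> (y + s *\<^sub>R d) *v blockproj S h)) \<le> C"
  shows "f (y + d) + \<psi> (y + d)
           \<le> f y + \<psi> y + blockproj S (gf y + g\<psi> y) \<bullet> d + (L + C) / 2 * norm d ^ 2"
proof -
  have "(H\<psi> (y + s *\<^sub>R d) *v d) \<bullet> d \<le> C * norm d ^ 2" if "0 \<le> s" "s \<le> 1" for s
    using block_quadratic_form_le[OF d] hess[OF that] by (meson mult_right_mono order_trans zero_le_power2 norm_ge_zero)
  then have "\<psi> (y + d) \<le> \<psi> y + g\<psi> y \<bullet> d + C / 2 * norm d ^ 2"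
    by (rule second_order_upper_bound[OF psi_grad psi_hess])
  moreover have "f (y + d) \<le> f y + gf y \<bullet> d + L / 2 * norm d ^ 2"
    by (rule block_lipschitz_upper_bound[OF f_grad d lip])
  ultimately show ?thesis
    by (simp add: inner_blockproj_block_space[OF d] inner_add_left add_divide_distrib algebra_simps)
qed

lemma cpgd_block_step_descent:
  fixes f \<psi> :: "real^'n \<Rightarrow> real" and gf g\<psi> :: "real^'n \<Rightarrow> real^'n"
    and H\<psi> :: "real^'n \<Rightarrow> real^'n^'n" and p :: nat and L Hp \<eta> \<alpha> HF :: real
  assumes f_grad: "\<And>z. (f has_derivative (\<lambda>h. gf z \<bullet> h)) (at z)"
    and psi_grad: "\<And>z. (\<psi> has_derivative (\<lambda>h. g\<psi> z \<bullet> h)) (at z)"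
    and psi_hess: "\<And>z. (g\<psi> has_derivative (\<lambda>h. H\<psi> z *v h)) (at z)"
    and lip: "\<And>h. h \<in> block_space S \<Longrightarrow> norm (blockproj S (gf (y + h) - gf y)) \<le> L * norm h"
    and hess: "\<And>z. onorm (\<lambda>h. blockproj S (H\<psi> z *v blockproj S h)) \<le> Hp * norm z ^ p"
    and Q: "Q \<subseteq> block_space S" "closed Q" "convex Q" "blockproj S y \<in> Q"
    and L: "0 \<le> L" and Hp: "0 \<le> Hp" and \<eta>: "0 < \<eta>" and \<alpha>: "0 \<le> \<alpha>" and p: "1 \<le> p"
    and root: "2^(p-1) * Hp * \<alpha> ^ (p+1) + (2^(p-1) * Hp * norm y ^ p + (L + \<eta>) / 2) * \<alpha>
                 = norm (blockproj S (gf y + g\<psi> y))"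
    and HF: "HF = 2^(p-1) * Hp * norm y ^ p + 2^(p-1) * Hp * \<alpha> ^ p + (L + \<eta>) / 2"
    and y': "y' = y - blockproj S y
                 + closest_point Q (blockproj S y - (1 / HF) *\<^sub>R blockproj S (gf y + g\<psi> y))"
  shows "f y' + \<psi> y' \<le> f y + \<psi> y - \<eta> / 2 * norm (y' - y) ^ 2"
proof -
  define G where "G = blockproj S (gf y + g\<psi> y)"
  define d where "d = closest_point Q (blockproj S y - (1 / HF) *\<^sub>R G) - blockproj S y"
  define C where "C = 2^(p-1) * Hp * (norm y ^ p + \<alpha> ^ p)"
  have C: "0 \<le> C"
    unfolding C_def using Hp \<alpha> by simp
  have HF_C: "HF = C + (L + \<eta>) / 2"
    unfolding HF C_def by (simp add: algebra_simps)
  have HF_pos: "0 < HF"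
    unfolding HF_C using C L \<eta> by (simp add: field_simps)
  have y'_d: "y' = y + d"
    using y' unfolding d_def G_def by simp
  have d: "d \<in> block_space S"
    unfolding d_def using Q closest_point_in_set[of Q] by (blast intro: block_space_diff)
  have "norm d \<le> norm G / HF" and G_d: "G \<bullet> d \<le> - HF * norm d ^ 2"
    using projected_gradient_step[OF Q(3,2,4) HF_pos] unfolding d_def by auto
  moreover have "HF * \<alpha> = norm G"
    unfolding G_def root[symmetric] HF by (simp add: algebra_simps)
  ultimately have "HF * norm d \<le> HF * \<alpha>"
    using HF_pos by (simp add: field_simps)
  then have d_\<alpha>: "norm d \<le> \<alpha>"
    using HF_pos by simp
  have "onorm (\<lambda>h. blockproj S (H\<psi> (y + s *\<^sub>R d) *v blockproj S h)) \<le> C"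
    if "0 \<le> s" "s \<le> 1" for s
  proof -
    have "Hp * norm (y + s *\<^sub>R d) ^ p \<le> Hp * (2^(p-1) * (norm y ^ p + \<alpha> ^ p))"
      using norm_power_segment_le[OF d_\<alpha> that p] Hp by (rule mult_left_mono)
    then show ?thesis
      using hess[of "y + s *\<^sub>R d"] unfolding C_def by (simp add: mult_ac)
  qed
  then have "f y' + \<psi> y' \<le> f y + \<psi> y + G \<bullet> d + (L + C) / 2 * norm d ^ 2"
    unfolding y'_d G_def using block_upper_model[OF f_grad psi_grad psi_hess d lip] by simp
  also have "\<dots> \<le> f y + \<psi> y - \<eta> / 2 * norm d ^ 2"
  proof -
    have "0 \<le> C * norm d ^ 2"
      using C by simp
    then show ?thesis
      using G_d unfolding HF_C by (simp add: algebra_simps add_divide_distrib)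
  qed
  finally show ?thesis
    unfolding y'_d by simp
qed

lemma blockproj_unchanged_by_sweep:
  fixes z :: "nat \<Rightarrow> real^'n"
  assumes incr: "\<And>l. l \<in> {Suc i..j} \<Longrightarrow> z l - z (l - 1) \<in> block_space (B l)"
    and disj: "disjoint_family_on B I" and sweep: "{Suc i..j} \<subseteq> I"
    and m: "m \<in> I - {Suc i..j}" and "i \<le> j"
  shows "blockproj (B m) (z j) = blockproj (B m) (z i)"
  using \<open>i \<le> j\<close>
proof (induction j rule: dec_induct)
  case (step n)
  then have n: "Suc n \<in> {Suc i..j}"
    by simp
  then have "B (Suc n) \<inter> B m = {}"
    using disjoint_family_onD[OF disj] sweep m by blast
  then have "blockproj (B m) (z (Suc n) - z n) = 0"
    using incr[OF n] by (intro blockproj_block_space_disjoint) auto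
  then show ?case
    using step.IH by (simp add: blockproj_diff)
qed simp

lemma sweep_descent:
  fixes h :: "real^'n \<Rightarrow> real" and z :: "nat \<Rightarrow> real^'n"
  assumes disj: "disjoint_family_on B {1..N}"
    and incr: "\<And>l. l \<in> {1..N} \<Longrightarrow> z l - z (l - 1) \<in> block_space (B l)"
    and desc: "\<And>l. l \<in> {1..N} \<Longrightarrow> h (z l) \<le> h (z (l - 1)) - e / 2 * norm (z l - z (l - 1)) ^ 2"
  shows "h (z N) \<le> h (z 0) - e / 2 * norm (z N - z 0) ^ 2"
proof -
  have "h (z j) \<le> h (z 0) - e / 2 * norm (z j - z 0) ^ 2" if "j \<le> N" for j
    using that
  proof (induction j)
    case (Suc j)
    have "blockproj (B (Suc j)) (z j) = blockproj (B (Suc j)) (z 0)"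
      using Suc.prems incr by (intro blockproj_unchanged_by_sweep[OF _ disj]) auto
    moreover have "z (Suc j) - z j \<in> block_space (B (Suc j))"
      using incr[of "Suc j"] Suc.prems by simp
    ultimately have "(z j - z 0) \<bullet> (z (Suc j) - z j) = 0"
      by (metis inner_blockproj_block_space blockproj_diff diff_self inner_zero_left)
    then have "norm (z (Suc j) - z 0) ^ 2 = norm (z j - z 0) ^ 2 + norm (z (Suc j) - z j) ^ 2"
      using norm_add_Pythagorean[of "z j - z 0" "z (Suc j) - z j"] by (simp add: orthogonal_def)
    then show ?case
      using Suc desc[of "Suc j"] by (simp add: algebra_simps)
  qed simp
  then show ?thesis
    by simp
qed

lemma cINF_nested_lower:
  fixes \<eta> :: "'a \<Rightarrow> 'b \<Rightarrow> real"
  assumes "finite I" "i \<in> I" "\<And>m i. i \<in> I \<Longrightarrow> 0 \<le> \<eta> m i"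
  shows "(INF m. INF i\<in>I. \<eta> m i) \<le> \<eta> m i"
proof -
  have "0 \<le> (INF i\<in>I. \<eta> m i)" for m
    using assms by (intro cINF_greatest) auto
  then have "bdd_below (range (\<lambda>m. INF i\<in>I. \<eta> m i))"
    by (intro bdd_belowI[where m = 0]) auto
  then have "(INF m. INF i\<in>I. \<eta> m i) \<le> (INF i\<in>I. \<eta> m i)"
    by (rule cINF_lower) simp
  also have "\<dots> \<le> \<eta> m i"
    using assms by (intro cINF_lower bdd_below_finite) auto
  finally show ?thesis .
qed

lemma cpgd_outer_iteration:
  fixes f \<psi> :: "real^'n \<Rightarrow> real" and gf g\<psi> :: "real^'n \<Rightarrow> real^'n"
    and H\<psi> :: "real^'n \<Rightarrow> real^'n^'n" and z :: "nat \<Rightarrow> real^'n" and \<eta> \<alpha> HF :: "nat \<Rightarrow> real"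
  assumes disj: "disjoint_family_on B {1..N}" and nonempty: "\<And>i. i \<in> {1..N} \<Longrightarrow> B i \<noteq> {}"
    and f_grad: "\<And>y. (f has_derivative (\<lambda>h. gf y \<bullet> h)) (at y)"
    and psi_grad: "\<And>y. (\<psi> has_derivative (\<lambda>h. g\<psi> y \<bullet> h)) (at y)"
    and psi_hess: "\<And>y. (g\<psi> has_derivative (\<lambda>h. H\<psi> y *v h)) (at y)"
    and lip: "\<And>i y h. i \<in> {1..N} \<Longrightarrow>
               h \<in> block_space (B i) \<Longrightarrow> norm (blockproj (B i) (gf (y + h) - gf y)) \<le> L i y * norm h"
    and hess: "\<And>i y. i \<in> {1..N} \<Longrightarrow>
               onorm (\<lambda>h. blockproj (B i) (H\<psi> y *v blockproj (B i) h)) \<le> Hpsi i * norm y ^ p"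
    and Hpsi: "\<And>i. i \<in> {1..N} \<Longrightarrow> 0 \<le> Hpsi i" and p: "1 \<le> p"
    and Q: "\<And>i. i \<in> {1..N} \<Longrightarrow> Q i \<subseteq> block_space (B i)"
      "\<And>i. i \<in> {1..N} \<Longrightarrow> closed (Q i)" "\<And>i. i \<in> {1..N} \<Longrightarrow> convex (Q i)"
    and \<eta>: "\<And>i. i \<in> {1..N} \<Longrightarrow> 0 < \<eta> i" "\<And>i. i \<in> {1..N} \<Longrightarrow> e \<le> \<eta> i"
    and \<alpha>: "\<And>i. i \<in> {1..N} \<Longrightarrow> 0 \<le> \<alpha> i"
    and root: "\<And>i. i \<in> {1..N} \<Longrightarrow>
           2^(p-1) * Hpsi i * \<alpha> i ^ (p+1)
           + (2^(p-1) * Hpsi i * norm (z (i-1)) ^ p + (L i (z (i-1)) + \<eta> i) / 2) * \<alpha> i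
           = norm (blockproj (B i) (gf (z (i-1)) + g\<psi> (z (i-1))))"
    and HF: "\<And>i. i \<in> {1..N} \<Longrightarrow>
           HF i = 2^(p-1) * Hpsi i * norm (z (i-1)) ^ p + 2^(p-1) * Hpsi i * \<alpha> i ^ p
                  + (L i (z (i-1)) + \<eta> i) / 2"
    and step: "\<And>i. i \<in> {1..N} \<Longrightarrow>
           z i = z (i-1) - blockproj (B i) (z (i-1))
             + closest_point (Q i) (blockproj (B i) u
                 - (1 / HF i) *\<^sub>R blockproj (B i) (gf (z (i-1)) + g\<psi> (z (i-1))))"
    and start: "z 0 = u" and feasible: "u \<in> prodset N B Q"
  shows "z N \<in> prodset N B Q"
    and "f (z N) + \<psi> (z N) \<le> f u + \<psi> u - e / 2 * norm (z N - u) ^ 2"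
proof -
  have proj_Q: "closest_point (Q i) v \<in> Q i" if "i \<in> {1..N}" for i v
    using closest_point_in_set[OF Q(2)[OF that]] feasible that unfolding prodset_def by blast
  have proj_in: "closest_point (Q i) v \<in> block_space (B i)" if "i \<in> {1..N}" for i v
    using proj_Q Q(1) that by blast
  have incr: "z i - z (i - 1) \<in> block_space (B i)" if i: "i \<in> {1..N}" for i
    using step[OF i] block_space_diff[OF proj_in[OF i] blockproj_in_block_space] by simp
  have unchanged: "blockproj (B i) (z j) = blockproj (B i) (z i')"
    if "i' \<le> j" "j \<le> N" "i \<in> {1..N} - {Suc i'..j}" for i i' j
    using that incr by (intro blockproj_unchanged_by_sweep[OF _ disj]) auto
  have current: "blockproj (B i) (z (i - 1)) = blockproj (B i) u" if i: "i \<in> {1..N}" for i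
    using unchanged[of 0 "i - 1" i] i start by auto
  show "z N \<in> prodset N B Q"
  proof (unfold prodset_def, intro CollectI ballI)
    fix i
    assume i: "i \<in> {1..N}"
    have "blockproj (B i) (z N) = blockproj (B i) (z i)"
      using unchanged[of i N i] i by auto
    also have "\<dots> = closest_point (Q i) (blockproj (B i) u
                 - (1 / HF i) *\<^sub>R blockproj (B i) (gf (z (i-1)) + g\<psi> (z (i-1))))"
      using step[OF i] blockproj_replace_block[OF proj_in[OF i]] by simp
    finally show "blockproj (B i) (z N) \<in> Q i"
      using proj_Q[OF i] by simp
  qed
  have "f (z i) + \<psi> (z i) \<le> f (z (i - 1)) + \<psi> (z (i - 1)) - \<eta> i / 2 * norm (z i - z (i - 1)) ^ 2"
    if i: "i \<in> {1..N}" for i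
  proof (rule cpgd_block_step_descent[OF f_grad psi_grad psi_hess lip[OF i] hess[OF i] Q(1-3)[OF i] _
        block_lipschitz_const_nonneg[OF nonempty[OF i] lip[OF i]] Hpsi[OF i] \<eta>(1)[OF i] \<alpha>[OF i] p root[OF i] HF[OF i]])
    show "blockproj (B i) (z (i - 1)) \<in> Q i"
      using current[OF i] feasible i by (simp add: prodset_def)
    show "z i = z (i - 1) - blockproj (B i) (z (i - 1)) + closest_point (Q i) (blockproj (B i) (z (i - 1))
                 - (1 / HF i) *\<^sub>R blockproj (B i) (gf (z (i - 1)) + g\<psi> (z (i - 1))))"
      using step[OF i] current[OF i] by simp
  qed
  moreover have "\<eta> i / 2 * norm (z i - z (i - 1)) ^ 2 \<ge> e / 2 * norm (z i - z (i - 1)) ^ 2"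
    if "i \<in> {1..N}" for i
    using \<eta>(2)[OF that] by (intro mult_right_mono) auto
  ultimately show "f (z N) + \<psi> (z N) \<le> f u + \<psi> u - e / 2 * norm (z N - u) ^ 2"
    using sweep_descent[OF disj incr, of "\<lambda>y. f y + \<psi> y" e] start by force
qed

theorem lemma1:
  fixes f \<psi> :: "real^'n \<Rightarrow> real"
    and gf g\<psi> :: "real^'n \<Rightarrow> real^'n"
    and H\<psi> :: "real^'n \<Rightarrow> real^'n^'n"
    and N p :: nat
    and B :: "nat \<Rightarrow> 'n set"
    and Q :: "nat \<Rightarrow> (real^'n) set"
    and L :: "nat \<Rightarrow> real^'n \<Rightarrow> real"
    and Hpsi :: "nat \<Rightarrow> real"
    and x :: "nat \<Rightarrow> real^'n"
    and xin :: "nat \<Rightarrow> nat \<Rightarrow> real^'n"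
    and \<eta> \<alpha> HF :: "nat \<Rightarrow> nat \<Rightarrow> real"
    and k :: nat
  assumes blocks_nonempty: "\<forall>i\<in>{1..N}. B i \<noteq> {}"
    and blocks_disjoint: "\<forall>i\<in>{1..N}. \<forall>j\<in>{1..N}. i \<noteq> j \<longrightarrow> B i \<inter> B j = {}"
    and blocks_cover: "(\<Union>i\<in>{1..N}. B i) = UNIV"
    \<comment> \<open>(A.1)\<close>
    and f_grad: "\<forall>y. (f has_derivative (\<lambda>h. gf y \<bullet> h)) (at y)"
    and L_indep: "\<forall>i\<in>{1..N}. \<forall>y z. (\<forall>j. j \<notin> B i \<longrightarrow> y $ j = z $ j) \<longrightarrow> L i y = L i z"
    and L_lip: "\<forall>i\<in>{1..N}. \<forall>y. \<forall>h\<in>block_space (B i).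
                 norm (blockproj (B i) (gf (y + h) - gf y)) \<le> L i y * norm h"
    \<comment> \<open>(A.2)\<close>
    and psi_grad: "\<forall>y. (\<psi> has_derivative (\<lambda>h. g\<psi> y \<bullet> h)) (at y)"
    and psi_hess: "\<forall>y. (g\<psi> has_derivative (\<lambda>h. H\<psi> y *v h)) (at y)"
    and psi_hess_cont: "continuous_on UNIV H\<psi>"
    and p_ge: "p \<ge> 1"
    and Hpsi_pos: "\<forall>i\<in>{1..N}. Hpsi i > 0"
    and Hpsi_bound: "\<forall>i\<in>{1..N}. \<forall>y.
                 onorm (\<lambda>h. blockproj (B i) (H\<psi> y *v blockproj (B i) h)) \<le> Hpsi i * norm y ^ p"
    \<comment> \<open>(A.3)\<close>
    and Q_sub: "\<forall>i\<in>{1..N}. Q i \<subseteq> block_space (B i)"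
    and Q_closed: "\<forall>i\<in>{1..N}. closed (Q i)"
    and Q_convex: "\<forall>i\<in>{1..N}. convex (Q i)"
    and Q_nonempty: "\<forall>i\<in>{1..N}. Q i \<noteq> {}"
    \<comment> \<open>(A.4)\<close>
    and has_min: "\<exists>xs. \<forall>y. Fobj f \<psi> (prodset N B Q) xs \<le> Fobj f \<psi> (prodset N B Q) y"
    \<comment> \<open>algorithm CPGD\<close>
    and x0: "x 0 \<in> prodset N B Q"
    and xin_start: "\<forall>m. xin m 0 = x m"
    and xin_end: "\<forall>m. xin m N = x (Suc m)"
    and eta_pos: "\<forall>m. \<forall>i\<in>{1..N}. \<eta> m i > 0"
    and alpha_nonneg: "\<forall>m. \<forall>i\<in>{1..N}. \<alpha> m i \<ge> 0"
    and alpha_root: "\<forall>m. \<forall>i\<in>{1..N}.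
           2^(p-1) * Hpsi i * \<alpha> m i ^ (p+1)
           + (2^(p-1) * Hpsi i * norm (xin m (i-1)) ^ p + (L i (xin m (i-1)) + \<eta> m i) / 2) * \<alpha> m i
           = norm (blockproj (B i) (gf (xin m (i-1)) + g\<psi> (xin m (i-1))))"
    and HF_def: "\<forall>m. \<forall>i\<in>{1..N}.
           HF m i = 2^(p-1) * Hpsi i * norm (xin m (i-1)) ^ p + 2^(p-1) * Hpsi i * \<alpha> m i ^ p
                    + (L i (xin m (i-1)) + \<eta> m i) / 2"
    and step: "\<forall>m. \<forall>i\<in>{1..N}.
           xin m i = xin m (i-1) - blockproj (B i) (xin m (i-1))
             + closest_point (Q i) (blockproj (B i) (x m)
                 - (1 / HF m i) *\<^sub>R blockproj (B i) (gf (xin m (i-1)) + g\<psi> (xin m (i-1))))"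
  shows "Fobj f \<psi> (prodset N B Q) (x (Suc k))
           \<le> Fobj f \<psi> (prodset N B Q) (x k)
              - ereal ((INF m. INF i\<in>{1..N}. \<eta> m i) / 2 * norm (x (Suc k) - x k)^2)"
proof -
  have disj: "disjoint_family_on B {1..N}"
    using blocks_disjoint by (simp add: disjoint_family_on_def)
  define e where "e = (INF m. INF i\<in>{1..N}. \<eta> m i)"
  have e: "e \<le> \<eta> k i" if "i \<in> {1..N}" for i
    unfolding e_def using eta_pos that by (intro cINF_nested_lower) (auto intro: less_imp_le)
  show ?thesis
  proof (cases "x k \<in> prodset N B Q")
    case True
    note cpgd_outer_iteration[where z = "xin k" and u = "x k" and \<eta> = "\<eta> k"
        and \<alpha> = "\<alpha> k" and HF = "HF k" and e = e, OF disj blocks_nonempty[rule_format]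
        f_grad[rule_format] psi_grad[rule_format] psi_hess[rule_format] L_lip[rule_format]
        Hpsi_bound[rule_format] less_imp_le[OF Hpsi_pos[rule_format]] p_ge Q_sub[rule_format]
        Q_closed[rule_format] Q_convex[rule_format] eta_pos[rule_format] e alpha_nonneg[rule_format]
        alpha_root[rule_format] HF_def[rule_format] step[rule_format] xin_start[rule_format] True]
    then show ?thesis
      using True xin_end by (simp add: Fobj_def e_def)
  qed (simp add: Fobj_def) \<comment> \<open>an infeasible \<open>x k\<close> has objective value \<open>\<infinity>\<close>\<close>
qed

end
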